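(* Let $S$ be a graded reduced affine monoid, $\tilde S$, $\kappa,\delta$, and the orders $\prec$ on $M$ and $\tilde M$ as in the context. Suppose $\{(x^{\lambda},x^{\mu})\mid(\lambda,\mu)\in\Lambda\}$ is a Gröbner system of $\sim_S$ with respect to $\prec$. Then $\Gamma_1\cup\Gamma_2\cup\Gamma_3$ is a Gröbner system of $\sim_{\tilde S}$ with respect to $\prec$ on $\tilde M$, where $\Gamma_1=\{(x^{\lambda},x^{\mu})\mid\lambda,\mu\in\mathbb{N}_0^{\mathcal{A}(\tilde S)},\ (\kappa(\lambda),\kappa(\mu))\in\Lambda,\ \delta(\lambda)=\delta(\mu)\}$, $\Gamma_2=\{(x_{a[i]}x_{b[j]},x_{a[i-1]}x_{b[j+1]})\mid a,b\in\mathcal{A}(S),\ x_a\prec x_b,\ 0<i\le|a|,\ 0\le j<|b|\}$, $\Gamma_3=\{(x_{a[i]}x_{a[j]},x_{a[i-1]}x_{a[j+1]})\mid a\in\mathcal{A}(S),\ 0<i\le j<|a|\}$.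
   Context: A monoid is a commutative cancellative semigroup with identity; affine: finitely generated submonoid of a finitely generated free abelian group; reduced: only unit is the identity. $S$ is graded: $S=\bigsqcup_{d\in\mathbb{N}_0}S_d$, $S_dS_e\subseteq S_{d+e}$, $|s|=d$ for $s\in S_d$. $\mathcal{A}(S)$ is its set of atoms. $M$ is the free commutative monoid on $x_a$ ($a\in\mathcal{A}(S)$), elements $x^{\alpha}$, and $\sim_S$ the congruence $x^{\alpha}\sim_S x^{\gamma}$ iff $\prod a^{\alpha(a)}=\prod a^{\gamma(a)}$ in $S$. $\tilde S=\{s[i]\mid s\in S,0\le i\le|s|\}$ with $s[i]t[j]=(st)[i+j]$; its atoms are $a[i]$, $a\in\mathcal{A}(S)$, $0\le i\le|a|$; $\tilde M$ is the free commutative monoid on $x_{a[i]}$ and $\sim_{\tilde S}$ its defining congruence (defined analogously). $\kappa(\lambda)(a)=\sum_{i=0}^{|a|}\lambda(a[i])$, $\delta(\lambda)=\sum i\,\lambda(a[i])$. An admissible total order on a free commutative monoid is a total order with $x\prec y\Rightarrow xz\prec yz$ and $1\prec x$ for $x\neq1$. A finite $\Lambda\subset M\times M$ is a Gröbner system of a congruence $\sim$ if $x\sim y$ and $y\prec x$ for all $(x,y)\in\Lambda$, and every $z$ not divisible by any first component $x$ of a pair in $\Lambda$ is $\prec$-minimal in its $\sim$-class. Fix an admissible total order $\prec$ on $M$; enumerate $\mathcal{A}(S)=\{a_1,\dots,a_n\}$ with $x_{a_1}\prec\cdots\prec x_{a_n}$, $d_i=|a_i|$. Order $\tilde M$ by: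 $x^{\mu}\prec x^{\lambda}$ iff either $x^{\kappa(\mu)}\prec x^{\kappa(\lambda)}$ in $M$, or $\kappa(\mu)=\kappa(\lambda)$ and the sequence $(\mu(a_1[0]),\dots,\mu(a_1[d_1]),\mu(a_2[0]),\dots,\mu(a_n[d_n]))$ is lexicographically greater than $(\lambda(a_1[0]),\dots,\lambda(a_1[d_1]),\lambda(a_2[0]),\dots,\lambda(a_n[d_n]))$. *)

theory Defs
  imports "HOL-Analysis.Analysis" "HOL-Library.Multiset" "HOL-Library.Product_Plus"
begin

(* Monoids are written additively inside an ambient commutative monoid type.
   An affine monoid lives in Z^n = int^'n (a finitely generated free abelian group). *)

definition affine_monoid :: "(int ^ 'n) set \<Rightarrow> bool" where
  "affine_monoid S \<longleftrightarrow> (\<exists>G. finite G \<and> S = {sum_mset m | m. set_mset m \<subseteq> G})"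

definition monoid_unit :: "'a::comm_monoid_add set \<Rightarrow> 'a \<Rightarrow> bool" where
  "monoid_unit S u \<longleftrightarrow> u \<in> S \<and> (\<exists>v\<in>S. u + v = 0)"

definition reduced_monoid :: "'a::comm_monoid_add set \<Rightarrow> bool" where
  "reduced_monoid S \<longleftrightarrow> (\<forall>u. monoid_unit S u \<longrightarrow> u = 0)"

(* S = disjoint union of S_d = {s. deg s = d}, with S_d + S_e \<subseteq> S_(d+e) *)
definition graded_monoid :: "'a::comm_monoid_add set \<Rightarrow> ('a \<Rightarrow> nat) \<Rightarrow> bool" where
  "graded_monoid S deg \<longleftrightarrow> (\<forall>s\<in>S. \<forall>t\<in>S. deg (s + t) = deg s + deg t)"

definition monoid_atoms :: "'a::comm_monoid_add set \<Rightarrow> 'a set" where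
  "monoid_atoms S = {a\<in>S. \<not> monoid_unit S a \<and>
      (\<forall>b\<in>S. \<forall>c\<in>S. a = b + c \<longrightarrow> monoid_unit S b \<or> monoid_unit S c)}"

(* S-tilde: s[i] is the pair (s,i); (s,i)+(t,j) = (s+t,i+j) *)
definition tilde :: "'a::comm_monoid_add set \<Rightarrow> ('a \<Rightarrow> nat) \<Rightarrow> ('a \<times> nat) set" where
  "tilde S deg = {(s, i). s \<in> S \<and> i \<le> deg s}"

(* free commutative monoid on the x_a, a \<in> C; x^alpha is the multiset alpha *)
definition fmon :: "'a set \<Rightarrow> 'a multiset set" where
  "fmon C = {m. set_mset m \<subseteq> C}"

definition pres_cong :: "'a::comm_monoid_add multiset \<Rightarrow> 'a multiset \<Rightarrow> bool" where
  "pres_cong x y \<longleftrightarrow> sum_mset x = sum_mset y"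

definition admissible_order :: "'a set \<Rightarrow> ('a multiset \<Rightarrow> 'a multiset \<Rightarrow> bool) \<Rightarrow> bool" where
  "admissible_order C lt \<longleftrightarrow>
     (\<forall>x\<in>fmon C. \<not> lt x x) \<and>
     (\<forall>x\<in>fmon C. \<forall>y\<in>fmon C. \<forall>z\<in>fmon C. lt x y \<longrightarrow> lt y z \<longrightarrow> lt x z) \<and>
     (\<forall>x\<in>fmon C. \<forall>y\<in>fmon C. x = y \<or> lt x y \<or> lt y x) \<and>
     (\<forall>x\<in>fmon C. \<forall>y\<in>fmon C. \<forall>z\<in>fmon C. lt x y \<longrightarrow> lt (x + z) (y + z)) \<and>
     (\<forall>x\<in>fmon C. x \<noteq> {#} \<longrightarrow> lt {#} x)"

definition groebner_system ::
  "'a set \<Rightarrow> ('a multiset \<Rightarrow> 'a multiset \<Rightarrow> bool) \<Rightarrow> ('a multiset \<Rightarrow> 'a multiset \<Rightarrow> bool)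
     \<Rightarrow> ('a multiset \<times> 'a multiset) set \<Rightarrow> bool" where
  "groebner_system C eqv lt \<Lambda> \<longleftrightarrow>
     finite \<Lambda> \<and> \<Lambda> \<subseteq> fmon C \<times> fmon C \<and>
     (\<forall>(x, y)\<in>\<Lambda>. eqv x y \<and> lt y x) \<and>
     (\<forall>z\<in>fmon C. (\<forall>(x, y)\<in>\<Lambda>. \<not> x \<subseteq># z) \<longrightarrow>
        (\<forall>w\<in>fmon C. eqv w z \<longrightarrow> \<not> lt w z))"

definition kappa :: "('a \<times> nat) multiset \<Rightarrow> 'a multiset" where
  "kappa l = image_mset fst l"

definition delta :: "('a \<times> nat) multiset \<Rightarrow> nat" where
  "delta l = sum_mset (image_mset snd l)"

(* order of the positions a_1[0],...,a_1[d_1],a_2[0],...: a_k before a_l iff x_{a_k} \<prec> x_{a_l} *)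
definition pos_less :: "('a multiset \<Rightarrow> 'a multiset \<Rightarrow> bool) \<Rightarrow> 'a \<times> nat \<Rightarrow> 'a \<times> nat \<Rightarrow> bool" where
  "pos_less lt q p \<longleftrightarrow> lt {#fst q#} {#fst p#} \<or> (fst q = fst p \<and> snd q < snd p)"

definition lex_greater :: "('a multiset \<Rightarrow> 'a multiset \<Rightarrow> bool) \<Rightarrow> ('a \<times> nat) multiset \<Rightarrow> ('a \<times> nat) multiset \<Rightarrow> bool" where
  "lex_greater lt mu la \<longleftrightarrow>
     (\<exists>p. count la p < count mu p \<and> (\<forall>q. pos_less lt q p \<longrightarrow> count mu q = count la q))"

definition tilde_order :: "('a multiset \<Rightarrow> 'a multiset \<Rightarrow> bool) \<Rightarrow> ('a \<times> nat) multiset \<Rightarrow> ('a \<times> nat) multiset \<Rightarrow> bool" where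
  "tilde_order lt mu la \<longleftrightarrow>
     lt (kappa mu) (kappa la) \<or> (kappa mu = kappa la \<and> lex_greater lt mu la)"

definition Gamma1 :: "'a::comm_monoid_add set \<Rightarrow> ('a \<Rightarrow> nat) \<Rightarrow> ('a multiset \<times> 'a multiset) set
     \<Rightarrow> (('a \<times> nat) multiset \<times> ('a \<times> nat) multiset) set" where
  "Gamma1 S deg \<Lambda> = {(l, m). l \<in> fmon (monoid_atoms (tilde S deg)) \<and> m \<in> fmon (monoid_atoms (tilde S deg))
       \<and> (kappa l, kappa m) \<in> \<Lambda> \<and> delta l = delta m}"

definition Gamma2 :: "'a::comm_monoid_add set \<Rightarrow> ('a \<Rightarrow> nat) \<Rightarrow> ('a multiset \<Rightarrow> 'a multiset \<Rightarrow> bool)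
     \<Rightarrow> (('a \<times> nat) multiset \<times> ('a \<times> nat) multiset) set" where
  "Gamma2 S deg lt = {({#(a, i), (b, j)#}, {#(a, i - 1), (b, j + 1)#}) | a b i j.
       a \<in> monoid_atoms S \<and> b \<in> monoid_atoms S \<and> lt {#a#} {#b#} \<and> 0 < i \<and> i \<le> deg a \<and> j < deg b}"

definition Gamma3 :: "'a::comm_monoid_add set \<Rightarrow> ('a \<Rightarrow> nat)
     \<Rightarrow> (('a \<times> nat) multiset \<times> ('a \<times> nat) multiset) set" where
  "Gamma3 S deg = {({#(a, i), (a, j)#}, {#(a, i - 1), (a, j + 1)#}) | a i j.
       a \<in> monoid_atoms S \<and> 0 < i \<and> i \<le> j \<and> j < deg a}"

end

theory Submission
  imports Defs
begin

(* Since x^l ~ x^m in the tilde monoid iff kappa l ~ kappa m in S and delta l = delta m, the pairs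
   of Gamma1 decrease already under kappa, while a pair of Gamma2 or Gamma3 moves one unit of level
   from a[i] to a later position, so its first difference is at a[i-1].

   For minimality let z avoid all leading terms and let w ~ z with w below z.  A leading term of
   Lambda dividing kappa z would lift to a leading term of Gamma1 dividing z (the degree is additive,
   so the level sum can be redistributed), hence kappa z is minimal, kappa w = kappa z, and w is
   lexicographically greater than z, first at some a[k].  Then z contains some a[j] with j > k, so
   avoiding Gamma2 puts every atom above a at its top level in z, and avoiding Gamma3 leaves at most
   one level of a strictly between 0 and |a|.  Comparing level sums atom by atom gives
   delta w < delta z, a contradiction. *)

lemma reduced_monoid_unit_iff:
  assumes "0 \<in> S" and "reduced_monoid S"
  shows "monoid_unit S u \<longleftrightarrow> u = 0"
  using assms unfolding reduced_monoid_def monoid_unit_def by (metis add_0)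

lemma graded_monoid_deg_zero:
  assumes "graded_monoid S deg" and "0 \<in> S"
  shows "deg 0 = 0"
  using assms unfolding graded_monoid_def by (metis add_0 add_left_cancel add.right_neutral)

lemma submonoid_sum_mset_mem:
  assumes "0 \<in> S" and "\<And>x y. x \<in> S \<Longrightarrow> y \<in> S \<Longrightarrow> x + y \<in> S" and "set_mset m \<subseteq> S"
  shows "sum_mset m \<in> S"
  using assms(3) by (induction m) (auto intro: assms(1,2))

lemma graded_monoid_deg_sum_mset:
  assumes "graded_monoid S deg" and "0 \<in> S" and "\<And>x y. x \<in> S \<Longrightarrow> y \<in> S \<Longrightarrow> x + y \<in> S"
    and "set_mset m \<subseteq> S"
  shows "deg (sum_mset m) = (\<Sum>x\<in>#m. deg x)"
  using assms(4)
proof (induction m)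
  case empty
  then show ?case using graded_monoid_deg_zero assms(1,2) by simp
next
  case (add x m)
  then have "sum_mset m \<in> S" using submonoid_sum_mset_mem assms(2,3) by auto
  then show ?case using add assms(1) unfolding graded_monoid_def by simp
qed

lemma affine_monoid_zero: "affine_monoid S \<Longrightarrow> 0 \<in> S"
  unfolding affine_monoid_def by (auto intro!: exI[of _ "{#}"])

lemma affine_monoid_add:
  assumes "affine_monoid S" and "x \<in> S" and "y \<in> S"
  shows "x + y \<in> S"
proof -
  obtain G where G: "S = {sum_mset m | m. set_mset m \<subseteq> G}"
    using assms(1) unfolding affine_monoid_def by blast
  obtain mx my where "x = sum_mset mx" "set_mset mx \<subseteq> G" "y = sum_mset my" "set_mset my \<subseteq> G"
    using assms(2,3) G by blast
  then have "x + y = sum_mset (mx + my)" and "set_mset (mx + my) \<subseteq> G" by auto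
  then show ?thesis using G by blast
qed

lemma monoid_atoms_subset_generators:
  assumes S: "S = {sum_mset m | m. set_mset m \<subseteq> G}" and "reduced_monoid S"
  shows "monoid_atoms S \<subseteq> G"
proof
  fix a assume a: "a \<in> monoid_atoms S"
  have "0 \<in> S" using S by (auto intro!: exI[of _ "{#}"])
  then have unit: "monoid_unit S u \<longleftrightarrow> u = 0" for u
    using reduced_monoid_unit_iff assms(2) by blast
  have "a \<in> G" if "set_mset m \<subseteq> G" and "sum_mset m = a" for m
    using that
  proof (induction m)
    case empty
    then show ?case using a unit unfolding monoid_atoms_def by auto
  next
    case (add g m)
    have "g \<in> S" using add.prems(1) S by (auto intro!: exI[of _ "{#g#}"])
    moreover have "sum_mset m \<in> S" using add.prems(1) unfolding S by auto
    moreover have "a = g + sum_mset m" using add.prems(2) by simp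
    ultimately have "g = 0 \<or> sum_mset m = 0"
      using a unit unfolding monoid_atoms_def by blast
    then show ?case using add by auto
  qed
  then show "a \<in> G" using a S unfolding monoid_atoms_def by blast
qed

lemma affine_monoid_finite_atoms:
  assumes "affine_monoid S" and "reduced_monoid S"
  shows "finite (monoid_atoms S)"
proof -
  obtain G where "finite G" and "S = {sum_mset m | m. set_mset m \<subseteq> G}"
    using assms(1) unfolding affine_monoid_def by blast
  then show ?thesis using monoid_atoms_subset_generators assms(2) finite_subset by blast
qed

lemma tilde_unit_iff:
  assumes "0 \<in> S" and "reduced_monoid S"
  shows "monoid_unit (tilde S deg) q \<longleftrightarrow> q = 0"
proof
  assume "monoid_unit (tilde S deg) q"
  then obtain v where "q \<in> tilde S deg" "v \<in> tilde S deg" "q + v = 0"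
    unfolding monoid_unit_def by blast
  then have "monoid_unit S (fst q)" and "snd q = 0"
    unfolding tilde_def monoid_unit_def by (auto simp: prod_eq_iff)
  then show "q = 0" using reduced_monoid_unit_iff[OF assms] by (simp add: prod_eq_iff)
next
  assume "q = 0"
  moreover have "0 \<in> tilde S deg" using assms(1) unfolding tilde_def zero_prod_def by auto
  ultimately show "monoid_unit (tilde S deg) q" unfolding monoid_unit_def by (metis add_0)
qed

lemma tilde_atoms_iff:
  assumes "0 \<in> S" and "reduced_monoid S" and "graded_monoid S deg"
  shows "(x, i) \<in> monoid_atoms (tilde S deg) \<longleftrightarrow> x \<in> monoid_atoms S \<and> i \<le> deg x"
proof -
  have unit: "monoid_unit S u \<longleftrightarrow> u = 0" for u
    using reduced_monoid_unit_iff assms(1,2) by blast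
  have tilde_unit: "monoid_unit (tilde S deg) q \<longleftrightarrow> q = 0" for q
    using tilde_unit_iff assms(1,2) by blast
  have deg0: "deg 0 = 0" using graded_monoid_deg_zero assms(1,3) by blast
  show ?thesis
  proof
    assume at: "(x, i) \<in> monoid_atoms (tilde S deg)"
    then have x: "x \<in> S" and i: "i \<le> deg x" unfolding monoid_atoms_def tilde_def by auto
    have "x \<noteq> 0" using at i deg0 tilde_unit unfolding monoid_atoms_def by (auto simp: zero_prod_def)
    moreover have "b = 0 \<or> c = 0" if "b \<in> S" "c \<in> S" "x = b + c" for b c
    proof -
      have "deg x = deg b + deg c" using assms(3) that unfolding graded_monoid_def by auto
      then have "(b, min i (deg b)) \<in> tilde S deg" and "(c, i - min i (deg b)) \<in> tilde S deg"
        using that i unfolding tilde_def by auto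
      moreover have "(x, i) = (b, min i (deg b)) + (c, i - min i (deg b))" using that by auto
      ultimately have "(b, min i (deg b)) = 0 \<or> (c, i - min i (deg b)) = 0"
        using at tilde_unit unfolding monoid_atoms_def by blast
      then show ?thesis by (auto simp: zero_prod_def)
    qed
    ultimately show "x \<in> monoid_atoms S \<and> i \<le> deg x"
      using x i unit unfolding monoid_atoms_def by blast
  next
    assume xi: "x \<in> monoid_atoms S \<and> i \<le> deg x"
    then have x: "x \<in> S" "x \<noteq> 0" using unit unfolding monoid_atoms_def by auto
    have "b = 0 \<or> c = 0" if "b \<in> tilde S deg" "c \<in> tilde S deg" "(x, i) = b + c" for b c
    proof -
      have "fst b \<in> S" "fst c \<in> S" "x = fst b + fst c"
        using that unfolding tilde_def by auto
      then have "fst b = 0 \<or> fst c = 0" using xi unit unfolding monoid_atoms_def by blast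
      then show ?thesis using that deg0 unfolding tilde_def by (auto simp: prod_eq_iff)
    qed
    moreover have "(x, i) \<in> tilde S deg" using x xi unfolding tilde_def by auto
    moreover have "\<not> monoid_unit (tilde S deg) (x, i)" using x tilde_unit by (simp add: zero_prod_def)
    ultimately show "(x, i) \<in> monoid_atoms (tilde S deg)"
      using tilde_unit unfolding monoid_atoms_def by blast
  qed
qed

lemma fmon_tilde_atoms_iff:
  assumes "0 \<in> S" and "reduced_monoid S" and "graded_monoid S deg"
  shows "l \<in> fmon (monoid_atoms (tilde S deg)) \<longleftrightarrow> (\<forall>(x, i)\<in>#l. x \<in> monoid_atoms S \<and> i \<le> deg x)"
  using tilde_atoms_iff[OF assms] unfolding fmon_def by auto

lemma finite_tilde_atoms:
  assumes "0 \<in> S" and "reduced_monoid S" and "graded_monoid S deg" and "finite (monoid_atoms S)"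
  shows "finite (monoid_atoms (tilde S deg))"
proof (rule finite_subset)
  show "monoid_atoms (tilde S deg) \<subseteq> Sigma (monoid_atoms S) (\<lambda>x. {..deg x})"
    using tilde_atoms_iff[OF assms(1-3)] by auto
qed (use assms(4) in auto)

lemma sum_mset_kappa_delta: "sum_mset l = (sum_mset (kappa l), delta l)"
  unfolding kappa_def delta_def by (induction l) (auto simp: zero_prod_def)

lemma pres_cong_kappa_delta_iff:
  "pres_cong l m \<longleftrightarrow> pres_cong (kappa l) (kappa m) \<and> delta l = delta m"
  unfolding pres_cong_def by (simp add: sum_mset_kappa_delta)

lemma delta_le_sum_deg:
  "\<forall>(x, i)\<in>#l. i \<le> deg x \<Longrightarrow> delta l \<le> (\<Sum>x\<in>#kappa l. deg x)"
  unfolding kappa_def delta_def by (induction l) (auto intro: add_mono)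

lemma exists_lift_with_delta:
  "D \<le> (\<Sum>x\<in>#k. deg x) \<Longrightarrow> \<exists>l. kappa l = k \<and> delta l = D \<and> (\<forall>(x, i)\<in>#l. i \<le> deg x)"
proof (induction k arbitrary: D)
  case empty
  then show ?case by (auto simp: kappa_def delta_def)
next
  case (add x k)
  have "D - min D (deg x) \<le> (\<Sum>x\<in>#k. deg x)" using add.prems by auto
  then obtain l where "kappa l = k" "delta l = D - min D (deg x)" "\<forall>(x, i)\<in>#l. i \<le> deg x"
    using add.IH by blast
  then show ?case
    by (intro exI[of _ "add_mset (x, min D (deg x)) l"]) (auto simp: kappa_def delta_def)
qed

definition levels :: "'a \<Rightarrow> ('a \<times> nat) multiset \<Rightarrow> nat multiset" where
  "levels a l = image_mset snd (filter_mset (\<lambda>p. fst p = a) l)"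

lemma count_levels [simp]: "count (levels a l) i = count l (a, i)"
  unfolding levels_def by (induction l) auto

lemma in_levels_iff [simp]: "i \<in># levels a l \<longleftrightarrow> (a, i) \<in># l"
  by (simp only: count_greater_zero_iff[symmetric] count_levels)

lemma size_levels: "size (levels a l) = count (kappa l) a"
  unfolding levels_def kappa_def by (induction l) auto

lemma image_mset_Pair_levels: "image_mset (Pair a) (levels a l) = filter_mset (\<lambda>p. fst p = a) l"
  unfolding levels_def by (induction l) auto

lemma delta_eq_sum_levels:
  assumes "finite B" and "set_mset (kappa l) \<subseteq> B"
  shows "delta l = (\<Sum>a\<in>B. sum_mset (levels a l))"
  using assms(2)
proof (induction l)
  case empty
  then show ?case by (simp add: delta_def levels_def)
next
  case (add p l)
  obtain a i where p: "p = (a, i)" by fastforce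
  have "a \<in> B" using add.prems p by (simp add: kappa_def)
  have "(\<Sum>b\<in>B. sum_mset (levels b (add_mset p l)))
      = (\<Sum>b\<in>B. sum_mset (levels b l) + (if b = a then i else 0))"
    unfolding p levels_def by (intro sum.cong) auto
  also have "\<dots> = delta l + i"
    using add \<open>a \<in> B\<close> assms(1) by (simp add: sum.distrib kappa_def)
  finally show ?case by (simp add: p delta_def)
qed

lemma sum_mset_le_size_mult: "\<forall>x\<in>#M. x \<le> (d::nat) \<Longrightarrow> sum_mset M \<le> size M * d"
  by (induction M) auto

lemma sum_mset_ge_size_mult: "\<forall>x\<in>#M. (d::nat) \<le> x \<Longrightarrow> size M * d \<le> sum_mset M"
  by (induction M) auto

lemma sum_mset_ge_if_almost_saturated:
  fixes M :: "nat multiset"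
  assumes "M \<noteq> {#}" and "\<forall>x\<in>#M. c \<le> x" and "c \<le> d"
    and "\<forall>x y. {#x, y#} \<subseteq># M \<longrightarrow> d \<le> x \<or> d \<le> y"
  shows "(size M - 1) * d + c \<le> sum_mset M"
  using assms
proof (induction M)
  case empty
  then show ?case by simp
next
  case (add x M)
  show ?case
  proof (cases "M = {#}")
    case True
    then show ?thesis using add.prems by simp
  next
    case False
    have pairs: "\<forall>y z. {#y, z#} \<subseteq># M \<longrightarrow> d \<le> y \<or> d \<le> z"
      using add.prems(4) by (metis add_mset_add_single mset_subset_eq_add_left subset_mset.order_trans)
    show ?thesis
    proof (cases "d \<le> x")
      case True
      then show ?thesis using add.IH[OF False _ add.prems(3) pairs] add.prems(2) False
        by (cases "size M") auto
    next
      case False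
      have "d \<le> y" if "y \<in># M" for y
      proof -
        have "{#x, y#} \<subseteq># add_mset x M" using that by (simp add: mset_subset_eq_add_mset_cancel)
        then show ?thesis using add.prems(4) False by blast
      qed
      then show ?thesis using sum_mset_ge_size_mult[of M d] add.prems(2) by simp
    qed
  qed
qed

lemma multiset_split_at:
  fixes M :: "nat multiset"
  shows "M = filter_mset (\<lambda>x. x < k) M + replicate_mset (count M k) k + filter_mset (\<lambda>x. k < x) M"
  by (rule multiset_eqI) auto

lemma filter_mset_below_eq:
  fixes W Z :: "nat multiset"
  assumes "\<forall>i<k. count W i = count Z i"
  shows "filter_mset (\<lambda>x. x < k) W = filter_mset (\<lambda>x. x < k) Z"
  using assms by (intro multiset_eqI) auto

lemma size_filter_above_if_count_less:
  fixes W Z :: "nat multiset"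
  assumes "size W = size Z" and "\<forall>i<k. count W i = count Z i"
  shows "size (filter_mset (\<lambda>x. k < x) Z) + count Z k = size (filter_mset (\<lambda>x. k < x) W) + count W k"
proof -
  have "size W = size (filter_mset (\<lambda>x. x < k) W) + count W k + size (filter_mset (\<lambda>x. k < x) W)"
    by (subst multiset_split_at[of W k]) simp
  moreover have "size Z = size (filter_mset (\<lambda>x. x < k) Z) + count Z k + size (filter_mset (\<lambda>x. k < x) Z)"
    by (subst multiset_split_at[of Z k]) simp
  ultimately show ?thesis using assms filter_mset_below_eq[OF assms(2)] by simp
qed

lemma exists_greater_if_count_less:
  fixes W Z :: "nat multiset"
  assumes "size W = size Z" and "\<forall>i<k. count W i = count Z i" and "count Z k < count W k"
  shows "\<exists>j\<in>#Z. k < j"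
proof -
  have "size (filter_mset (\<lambda>x. k < x) Z) \<noteq> 0"
    using size_filter_above_if_count_less[OF assms(1,2)] assms(3) by linarith
  then obtain j where "j \<in># filter_mset (\<lambda>x. k < x) Z" by (metis multiset_nonemptyE size_empty)
  then show ?thesis by auto
qed

lemma sum_mset_less_if_count_less:
  fixes W Z :: "nat multiset"
  assumes W: "\<forall>x\<in>#W. x \<le> d" and Z: "\<forall>x\<in>#Z. x \<le> d" and size: "size W = size Z"
    and below: "\<forall>i<k. count W i = count Z i" and at: "count Z k < count W k"
    and pairs: "\<forall>x y. {#x, y#} \<subseteq># Z \<longrightarrow> 0 < x \<longrightarrow> 0 < y \<longrightarrow> d \<le> x \<or> d \<le> y"
  shows "sum_mset W < sum_mset Z"
proof -
  define HW where "HW = filter_mset (\<lambda>x. k < x) W"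
  define HZ where "HZ = filter_mset (\<lambda>x. k < x) Z"
  define e where "e = count W k - count Z k - 1"
  have cW: "count W k = count Z k + e + 1" using at unfolding e_def by simp
  have sizes: "size HZ = size HW + e + 1"
    using size_filter_above_if_count_less[OF size below] cW unfolding HW_def HZ_def by simp
  \<comment> \<open>the surplus of \<open>W\<close> at level \<open>k\<close> is matched by \<open>e + 1\<close> extra elements of \<open>Z\<close> above \<open>k\<close>,
    all but at most one of them equal to \<open>d\<close>\<close>
  then obtain j where "j \<in># HZ" by (metis add_eq_0_iff_both_eq_0 multiset_nonemptyE size_empty zero_neq_one)
  then have "k + 1 \<le> d" using Z unfolding HZ_def by auto
  have "d \<le> x \<or> d \<le> y" if "{#x, y#} \<subseteq># HZ" for x y
  proof -
    have "x \<in># HZ" and "y \<in># HZ" using that by (auto dest: mset_subset_eqD)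
    then have "0 < x" and "0 < y" unfolding HZ_def by auto
    moreover have "{#x, y#} \<subseteq># Z"
      using that multiset_filter_subset subset_mset.order_trans unfolding HZ_def by metis
    ultimately show ?thesis using pairs by blast
  qed
  moreover have "HZ \<noteq> {#}" and "\<forall>x\<in>#HZ. k + 1 \<le> x" using \<open>j \<in># HZ\<close> unfolding HZ_def by auto
  ultimately have "(size HZ - 1) * d + (k + 1) \<le> sum_mset HZ"
    using sum_mset_ge_if_almost_saturated[of HZ "k + 1" d] \<open>k + 1 \<le> d\<close> by blast
  then have lowZ: "size HW * d + e * d + k + 1 \<le> sum_mset HZ"
    using sizes by (simp add: algebra_simps)
  have upW: "sum_mset HW \<le> size HW * d"
    using sum_mset_le_size_mult W unfolding HW_def by auto
  have "e * k \<le> e * d" using \<open>k + 1 \<le> d\<close> by simp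
  moreover have "sum_mset W = sum_mset (filter_mset (\<lambda>x. x < k) Z) + count Z k * k + e * k + k + sum_mset HW"
    unfolding HW_def filter_mset_below_eq[OF below, symmetric]
    by (subst multiset_split_at[of W k]) (simp add: algebra_simps cW)
  moreover have "sum_mset Z = sum_mset (filter_mset (\<lambda>x. x < k) Z) + count Z k * k + sum_mset HZ"
    unfolding HZ_def by (subst multiset_split_at[of Z k]) simp
  ultimately show ?thesis
    using lowZ upW by linarith
qed

lemma admissible_order_singleton:
  assumes "admissible_order A lt" and "a \<in> A" and "b \<in> A"
  shows admissible_order_singleton_irrefl: "\<not> lt {#a#} {#a#}"
    and admissible_order_singleton_asym: "lt {#a#} {#b#} \<Longrightarrow> \<not> lt {#b#} {#a#}"
    and admissible_order_singleton_total: "a \<noteq> b \<Longrightarrow> lt {#a#} {#b#} \<or> lt {#b#} {#a#}"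
proof -
  have a: "{#a#} \<in> fmon A" and b: "{#b#} \<in> fmon A" using assms(2,3) by (auto simp: fmon_def)
  have irrefl: "\<forall>x\<in>fmon A. \<not> lt x x"
    using assms(1) unfolding admissible_order_def by (elim conjE) assumption
  have trans: "\<forall>x\<in>fmon A. \<forall>y\<in>fmon A. \<forall>z\<in>fmon A. lt x y \<longrightarrow> lt y z \<longrightarrow> lt x z"
    using assms(1) unfolding admissible_order_def by (elim conjE) assumption
  have total: "\<forall>x\<in>fmon A. \<forall>y\<in>fmon A. x = y \<or> lt x y \<or> lt y x"
    using assms(1) unfolding admissible_order_def by (elim conjE) assumption
  show "\<not> lt {#a#} {#a#}" using irrefl a by blast
  show "lt {#a#} {#b#} \<Longrightarrow> \<not> lt {#b#} {#a#}" using irrefl trans a b by blast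
  show "a \<noteq> b \<Longrightarrow> lt {#a#} {#b#} \<or> lt {#b#} {#a#}" using total a b by blast
qed

lemma pos_less_same_atom:
  assumes "admissible_order A lt" and "a \<in> A"
  shows "pos_less lt (a, i) (a, k) \<longleftrightarrow> i < k"
  using admissible_order_singleton_irrefl[OF assms assms(2)] unfolding pos_less_def by auto

lemma not_pos_less_higher_atom:
  assumes "admissible_order A lt" and "a \<in> A" and "b \<in> A" and "lt {#a#} {#b#}"
  shows "\<not> pos_less lt (b, j) (a, k)"
  using assms admissible_order_singleton_asym[OF assms(1-3)] admissible_order_singleton_irrefl[OF assms(1,2,2)]
  unfolding pos_less_def by auto

lemma pres_cong_shift:
  fixes i j :: nat
  assumes "0 < i"
  shows "pres_cong {#(a, i), (b, j)#} {#(a, i - 1), (b, j + 1)#}"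
  using assms unfolding pres_cong_kappa_delta_iff by (auto simp: pres_cong_def kappa_def delta_def)

lemma tilde_order_shift:
  assumes "0 < i" and "(b, j) \<noteq> (a, i - 1)"
    and "\<forall>q\<in>{(a, i - 1), (a, i), (b, j), (b, j + 1)}. \<not> pos_less lt q (a, i - 1)"
  shows "tilde_order lt {#(a, i - 1), (b, j + 1)#} {#(a, i), (b, j)#}"
proof -
  have "lex_greater lt {#(a, i - 1), (b, j + 1)#} {#(a, i), (b, j)#}"
    unfolding lex_greater_def
  proof (intro exI[of _ "(a, i - 1)"] conjI allI impI)
    show "count {#(a, i), (b, j)#} (a, i - 1) < count {#(a, i - 1), (b, j + 1)#} (a, i - 1)"
      using assms(1,2) by auto
    fix q assume "pos_less lt q (a, i - 1)"
    then show "count {#(a, i - 1), (b, j + 1)#} q = count {#(a, i), (b, j)#} q"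
      using assms(3) by auto
  qed
  then show ?thesis unfolding tilde_order_def by (simp add: kappa_def)
qed

lemma Gamma_pair_cong_decreasing:
  assumes adm: "admissible_order (monoid_atoms S) lt" and \<Lambda>: "\<forall>(k, k')\<in>\<Lambda>. pres_cong k k' \<and> lt k' k"
    and "(l, l') \<in> Gamma1 S deg \<Lambda> \<union> Gamma2 S deg lt \<union> Gamma3 S deg"
  shows "pres_cong l l' \<and> tilde_order lt l' l"
  using assms(3)
proof (elim UnE)
  assume "(l, l') \<in> Gamma1 S deg \<Lambda>"
  then show ?thesis
    using \<Lambda> unfolding Gamma1_def pres_cong_kappa_delta_iff[of l] tilde_order_def by auto
next
  assume "(l, l') \<in> Gamma2 S deg lt"
  then obtain a b i j where l: "l = {#(a, i), (b, j)#}" "l' = {#(a, i - 1), (b, j + 1)#}"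
    and ab: "a \<in> monoid_atoms S" "b \<in> monoid_atoms S" "lt {#a#} {#b#}" and "0 < i"
    unfolding Gamma2_def by blast
  have "a \<noteq> b" using ab admissible_order_singleton_irrefl[OF adm] by blast
  have "tilde_order lt l' l" unfolding l
  proof (rule tilde_order_shift)
    show "(b, j) \<noteq> (a, i - 1)" using \<open>a \<noteq> b\<close> by simp
    show "\<forall>q\<in>{(a, i - 1), (a, i), (b, j), (b, j + 1)}. \<not> pos_less lt q (a, i - 1)"
      using pos_less_same_atom[OF adm ab(1)] not_pos_less_higher_atom[OF adm ab] by auto
  qed fact
  then show ?thesis using pres_cong_shift \<open>0 < i\<close> l by simp
next
  assume "(l, l') \<in> Gamma3 S deg"
  then obtain a i j where l: "l = {#(a, i), (a, j)#}" "l' = {#(a, i - 1), (a, j + 1)#}"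
    and a: "a \<in> monoid_atoms S" and "0 < i" "i \<le> j"
    unfolding Gamma3_def by blast
  moreover have "tilde_order lt l' l" unfolding l
    by (rule tilde_order_shift) (use \<open>0 < i\<close> \<open>i \<le> j\<close> pos_less_same_atom[OF adm a] in auto)
  ultimately show ?thesis using pres_cong_shift by simp
qed

lemma Gamma23_subset_shifts:
  "Gamma2 S deg lt \<union> Gamma3 S deg \<subseteq> {({#(a, i), (b, j)#}, {#(a, i - 1), (b, j + 1)#}) | a b i j.
     a \<in> monoid_atoms S \<and> b \<in> monoid_atoms S \<and> i \<le> deg a \<and> j < deg b}"
proof -
  have "Gamma3 S deg \<subseteq> {({#(a, i), (b, j)#}, {#(a, i - 1), (b, j + 1)#}) | a b i j.
     a \<in> monoid_atoms S \<and> b \<in> monoid_atoms S \<and> i \<le> deg a \<and> j < deg b}"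
    unfolding Gamma3_def using order.strict_implies_order order.trans by blast
  then show ?thesis unfolding Gamma2_def by blast
qed

lemma finite_Gamma:
  assumes "finite (monoid_atoms S)" and "finite (monoid_atoms (tilde S deg))" and "finite \<Lambda>"
  shows "finite (Gamma1 S deg \<Lambda> \<union> Gamma2 S deg lt \<union> Gamma3 S deg)"
proof -
  define T where "T = monoid_atoms (tilde S deg)"
  define P where "P = Sigma (monoid_atoms S) (\<lambda>a. {..deg a})"
  have "Gamma1 S deg \<Lambda> \<subseteq> (\<Union>(k, k')\<in>\<Lambda>. multisets_of_size T (size k) \<times> multisets_of_size T (size k'))"
  proof
    fix p assume "p \<in> Gamma1 S deg \<Lambda>"
    then obtain l l' where "p = (l, l')" "l \<in> fmon T" "l' \<in> fmon T" "(kappa l, kappa l') \<in> \<Lambda>"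
      unfolding Gamma1_def T_def by blast
    then show "p \<in> (\<Union>(k, k')\<in>\<Lambda>. multisets_of_size T (size k) \<times> multisets_of_size T (size k'))"
      by (intro UN_I[of "(kappa l, kappa l')"]) (auto simp: multisets_of_size_def fmon_def kappa_def)
  qed
  moreover have "finite (\<Union>(k, k')\<in>\<Lambda>. multisets_of_size T (size k) \<times> multisets_of_size T (size k'))"
    using assms(2,3) unfolding T_def by (auto simp: split_def)
  ultimately have "finite (Gamma1 S deg \<Lambda>)" by (rule finite_subset)
  have "Gamma2 S deg lt \<union> Gamma3 S deg \<subseteq> multisets_of_size P 2 \<times> multisets_of_size P 2"
    using Gamma23_subset_shifts unfolding P_def multisets_of_size_def by fastforce
  moreover have "finite (multisets_of_size P 2)" using assms(1) unfolding P_def by auto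
  ultimately have "finite (Gamma2 S deg lt \<union> Gamma3 S deg)" by (meson finite_SigmaI finite_subset)
  with \<open>finite (Gamma1 S deg \<Lambda>)\<close> show ?thesis by (simp add: Un_assoc)
qed

lemma Gamma_subset_fmon:
  assumes "0 \<in> S" and "reduced_monoid S" and "graded_monoid S deg"
  shows "Gamma1 S deg \<Lambda> \<union> Gamma2 S deg lt \<union> Gamma3 S deg
    \<subseteq> fmon (monoid_atoms (tilde S deg)) \<times> fmon (monoid_atoms (tilde S deg))"
proof -
  have "Gamma2 S deg lt \<union> Gamma3 S deg
    \<subseteq> fmon (monoid_atoms (tilde S deg)) \<times> fmon (monoid_atoms (tilde S deg))"
    using Gamma23_subset_shifts by (fastforce simp: fmon_tilde_atoms_iff[OF assms])
  then show ?thesis unfolding Gamma1_def by blast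
qed

lemma Gamma2_free_imp_top_level:
  assumes adm: "admissible_order (monoid_atoms S) lt" and free: "\<forall>(x, y)\<in>Gamma2 S deg lt. \<not> x \<subseteq># z"
    and ab: "a \<in> monoid_atoms S" "b \<in> monoid_atoms S" "lt {#a#} {#b#}"
    and "(a, i) \<in># z" "0 < i" "i \<le> deg a" and "(b, j) \<in># z" "j \<le> deg b"
  shows "j = deg b"
proof (rule ccontr)
  assume "j \<noteq> deg b"
  then have "j < deg b" using \<open>j \<le> deg b\<close> by simp
  then have "({#(a, i), (b, j)#}, {#(a, i - 1), (b, j + 1)#}) \<in> Gamma2 S deg lt"
    using ab \<open>0 < i\<close> \<open>i \<le> deg a\<close> unfolding Gamma2_def by blast
  moreover have "a \<noteq> b" using ab admissible_order_singleton_irrefl[OF adm] by blast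
  then have "{#(a, i), (b, j)#} \<subseteq># z"
    using assms by (simp add: insert_subset_eq_iff in_diff_count)
  ultimately show False using free by blast
qed

lemma Gamma3_free_imp_top_level_in_pair:
  assumes free: "\<forall>(x, y)\<in>Gamma3 S deg. \<not> x \<subseteq># z" and a: "a \<in> monoid_atoms S"
    and ij: "{#i, j#} \<subseteq># levels a z" and "0 < i" and "0 < j"
  shows "deg a \<le> i \<or> deg a \<le> j"
proof (rule ccontr)
  assume "\<not> ?thesis"
  then have "0 < min i j" "min i j \<le> max i j" "max i j < deg a" using \<open>0 < i\<close> \<open>0 < j\<close> by auto
  then have "({#(a, min i j), (a, max i j)#}, {#(a, min i j - 1), (a, max i j + 1)#}) \<in> Gamma3 S deg"
    using a unfolding Gamma3_def by blast
  moreover have "{#(a, min i j), (a, max i j)#} = image_mset (Pair a) {#i, j#}"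
    by (auto simp: min_def max_def add_mset_commute)
  moreover have "image_mset (Pair a) {#i, j#} \<subseteq># z"
    using image_mset_subseteq_mono[OF ij, of "Pair a"] image_mset_Pair_levels multiset_filter_subset
    by (metis subset_mset.order_trans)
  ultimately show False using free by fastforce
qed

lemma Lambda_divisor_lifts_to_Gamma1:
  assumes "0 \<in> S" and closed: "\<And>x y. x \<in> S \<Longrightarrow> y \<in> S \<Longrightarrow> x + y \<in> S"
    and "reduced_monoid S" and "graded_monoid S deg"
    and z: "z \<in> fmon (monoid_atoms (tilde S deg))"
    and \<Lambda>: "(k, k') \<in> \<Lambda>" "\<Lambda> \<subseteq> fmon (monoid_atoms S) \<times> fmon (monoid_atoms S)" "pres_cong k k'"
    and "k \<subseteq># kappa z"
  shows "\<exists>l l'. l \<subseteq># z \<and> (l, l') \<in> Gamma1 S deg \<Lambda>"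
proof -
  note tilde_atoms = fmon_tilde_atoms_iff[OF assms(1,3,4)]
  have "image_mset fst z = k + (kappa z - k)" using \<open>k \<subseteq># kappa z\<close> unfolding kappa_def by simp
  then obtain l where l: "l \<subseteq># z" "kappa l = k"
    unfolding kappa_def by (metis image_mset_eq_plusD mset_subset_eq_add_left)
  have "monoid_atoms S \<subseteq> S" unfolding monoid_atoms_def by auto
  then have k: "set_mset k \<subseteq> S" and k': "set_mset k' \<subseteq> S"
    using \<Lambda>(1,2) unfolding fmon_def by auto
  have "l \<in> fmon (monoid_atoms (tilde S deg))"
    using l(1) z unfolding fmon_def by (auto dest: mset_subset_eqD)
  then have "delta l \<le> (\<Sum>x\<in>#k. deg x)"
    using delta_le_sum_deg l(2) tilde_atoms by fastforce
  also have "\<dots> = deg (sum_mset k')"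
    using graded_monoid_deg_sum_mset[OF assms(4,1) closed] k \<Lambda>(3) unfolding pres_cong_def by metis
  also have "\<dots> = (\<Sum>x\<in>#k'. deg x)"
    using graded_monoid_deg_sum_mset[OF assms(4,1) closed k'] .
  finally obtain l' where l': "kappa l' = k'" "delta l' = delta l" "\<forall>(x, i)\<in>#l'. i \<le> deg x"
    using exists_lift_with_delta by blast
  have "set_mset k' \<subseteq> monoid_atoms S" using \<Lambda>(1,2) unfolding fmon_def by auto
  then have "\<forall>(x, i)\<in>#l'. x \<in> monoid_atoms S"
    using l'(1) unfolding kappa_def by fastforce
  then have "l' \<in> fmon (monoid_atoms (tilde S deg))" using l'(3) tilde_atoms by auto
  then have "(l, l') \<in> Gamma1 S deg \<Lambda>"
    using \<open>l \<in> fmon _\<close> l l' \<Lambda>(1) unfolding Gamma1_def by simp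
  then show ?thesis using l(1) by blast
qed

lemma Gamma23_free_not_lex_greater:
  assumes adm: "admissible_order (monoid_atoms S) lt"
    and z: "\<forall>(x, i)\<in>#z. x \<in> monoid_atoms S \<and> i \<le> deg x"
    and w: "\<forall>(x, i)\<in>#w. x \<in> monoid_atoms S \<and> i \<le> deg x"
    and kappa: "kappa w = kappa z" and delta: "delta w = delta z"
    and free2: "\<forall>(x, y)\<in>Gamma2 S deg lt. \<not> x \<subseteq># z"
    and free3: "\<forall>(x, y)\<in>Gamma3 S deg. \<not> x \<subseteq># z"
  shows "\<not> lex_greater lt w z"
proof
  assume "lex_greater lt w z"
  then obtain a k where at: "count z (a, k) < count w (a, k)"
    and below: "\<And>q. pos_less lt q (a, k) \<Longrightarrow> count w q = count z q"
    unfolding lex_greater_def by auto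
  have "(a, k) \<in># w" using at by (simp flip: count_greater_zero_iff)
  then have a: "a \<in> monoid_atoms S" using w by auto
  have same_size: "size (levels b w) = size (levels b z)" for b
    using kappa by (simp add: size_levels)
  have below_a: "\<forall>i<k. count (levels a w) i = count (levels a z) i"
    using below pos_less_same_atom[OF adm a] by simp
  obtain j where "(a, j) \<in># z" and "k < j"
    using exists_greater_if_count_less[OF same_size below_a] at by auto
  then have "j \<le> deg a" using z by auto
  have strict: "sum_mset (levels a w) < sum_mset (levels a z)"
  proof (rule sum_mset_less_if_count_less[where d = "deg a" and k = k])
    show "\<forall>x y. {#x, y#} \<subseteq># levels a z \<longrightarrow> 0 < x \<longrightarrow> 0 < y \<longrightarrow> deg a \<le> x \<or> deg a \<le> y"
      using Gamma3_free_imp_top_level_in_pair[OF free3 a] by blast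
  qed (use w z same_size below_a at in auto)
  have "sum_mset (levels b w) \<le> sum_mset (levels b z)" if "b \<in># kappa z" for b
  proof -
    have b: "b \<in> monoid_atoms S" using that z unfolding kappa_def by auto
    consider "b = a" | "lt {#b#} {#a#}" | "lt {#a#} {#b#}"
      using admissible_order_singleton_total[OF adm a b] by blast
    then show ?thesis
    proof cases
      case 2
      then have "levels b w = levels b z"
        using below by (intro multiset_eqI) (simp add: pos_less_def)
      then show ?thesis by simp
    next
      case 3
      have "\<forall>i\<in>#levels b z. deg b \<le> i"
      proof
        fix i assume "i \<in># levels b z"
        then have "(b, i) \<in># z" and "i \<le> deg b" using z by auto
        then show "deg b \<le> i"
          using Gamma2_free_imp_top_level[OF adm free2 a b 3 \<open>(a, j) \<in># z\<close> _ \<open>j \<le> deg a\<close>] \<open>k < j\<close>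
          by (metis not_less_zero not_gr_zero order.refl)
      qed
      moreover have "\<forall>i\<in>#levels b w. i \<le> deg b" using w by auto
      ultimately show ?thesis
        using sum_mset_le_size_mult sum_mset_ge_size_mult same_size by (metis order_trans)
    qed (use strict in simp)
  qed
  moreover have "a \<in># kappa z" using \<open>(a, j) \<in># z\<close> unfolding kappa_def by force
  ultimately have "(\<Sum>b\<in>set_mset (kappa z). sum_mset (levels b w))
      < (\<Sum>b\<in>set_mset (kappa z). sum_mset (levels b z))"
    using strict by (intro sum_strict_mono_ex1) auto
  then have "delta w < delta z"
    using delta_eq_sum_levels[of "set_mset (kappa z)"] kappa by simp
  then show False using delta by simp
qed

lemma Gamma_free_imp_minimal:
  assumes "0 \<in> S" and "\<And>x y. x \<in> S \<Longrightarrow> y \<in> S \<Longrightarrow> x + y \<in> S"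
    and "reduced_monoid S" and "graded_monoid S deg"
    and adm: "admissible_order (monoid_atoms S) lt"
    and \<Lambda>: "groebner_system (monoid_atoms S) pres_cong lt \<Lambda>"
    and z: "z \<in> fmon (monoid_atoms (tilde S deg))" and w: "w \<in> fmon (monoid_atoms (tilde S deg))"
    and free: "\<forall>(x, y)\<in>Gamma1 S deg \<Lambda> \<union> Gamma2 S deg lt \<union> Gamma3 S deg. \<not> x \<subseteq># z"
    and cong: "pres_cong w z"
  shows "\<not> tilde_order lt w z"
proof
  assume order: "tilde_order lt w z"
  note tilde_atoms = fmon_tilde_atoms_iff[OF assms(1,3,4)]
  have "kappa w \<in> fmon (monoid_atoms S)" and "kappa z \<in> fmon (monoid_atoms S)"
    using w z unfolding tilde_atoms unfolding fmon_def kappa_def by auto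
  moreover have "\<forall>(k, k')\<in>\<Lambda>. \<not> k \<subseteq># kappa z"
    using Lambda_divisor_lifts_to_Gamma1[OF assms(1-4) z] \<Lambda> free subset_mset.order_trans
    unfolding groebner_system_def by fast
  moreover have "pres_cong (kappa w) (kappa z)" and "delta w = delta z"
    using cong pres_cong_kappa_delta_iff by auto
  ultimately have "\<not> lt (kappa w) (kappa z)"
    using \<Lambda> unfolding groebner_system_def by blast
  then have "kappa w = kappa z" and "lex_greater lt w z"
    using order unfolding tilde_order_def by auto
  then show False
    using Gamma23_free_not_lex_greater[OF adm] w z free \<open>delta w = delta z\<close> unfolding tilde_atoms by blast
qed

theorem theorem5p3:
  fixes S :: "(int ^ 'n) set" and deg :: "int ^ 'n \<Rightarrow> nat"
    and lt :: "(int ^ 'n) multiset \<Rightarrow> (int ^ 'n) multiset \<Rightarrow> bool"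
    and \<Lambda> :: "((int ^ 'n) multiset \<times> (int ^ 'n) multiset) set"
  assumes "affine_monoid S" and "reduced_monoid S" and "graded_monoid S deg"
    and "admissible_order (monoid_atoms S) lt"
    and "groebner_system (monoid_atoms S) pres_cong lt \<Lambda>"
  shows "groebner_system (monoid_atoms (tilde S deg)) pres_cong (tilde_order lt)
           (Gamma1 S deg \<Lambda> \<union> Gamma2 S deg lt \<union> Gamma3 S deg)"
proof -
  have zero: "0 \<in> S" using affine_monoid_zero assms(1) .
  have closed: "\<And>x y. x \<in> S \<Longrightarrow> y \<in> S \<Longrightarrow> x + y \<in> S" using affine_monoid_add assms(1) .
  have atoms: "finite (monoid_atoms S)" using affine_monoid_finite_atoms assms(1,2) .
  have \<Lambda>: "finite \<Lambda>" "\<forall>(k, k')\<in>\<Lambda>. pres_cong k k' \<and> lt k' k"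
    using assms(5) unfolding groebner_system_def by auto
  show ?thesis
    unfolding groebner_system_def
    using finite_Gamma[OF atoms finite_tilde_atoms[OF zero assms(2,3) atoms] \<Lambda>(1)]
      Gamma_subset_fmon[OF zero assms(2,3)]
      Gamma_pair_cong_decreasing[OF assms(4) \<Lambda>(2)]
      Gamma_free_imp_minimal[OF zero closed assms(2-5)]
    by blast
qed

end
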